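(* Let $T$ be a lifted graph, $F\colon T\to T$ a continuous sun-like map of degree 1, ${\cal P}$ a basic partition of $F$ and ${\cal G}$ its covering graph. If $(A_n)_{n\ge0}$ is the itinerary of some point $x\in X^\infty$ and $\alpha_n:=A_0\dots A_n/\!\sim$, then $(\alpha_n)_{n\ge0}$ is an infinite path in ${\cal G}$. Conversely, if $(\alpha_n)_{n\ge0}$ is an infinite path in ${\cal G}$ with $H(\alpha_0)=k$, then there exists a point $x\in X^\infty$ whose itinerary $(A_n)_{n\ge0}$ satisfies $\alpha_n=A_0\dots A_{n+k}/\!\sim$ for all $n\ge0$.
   Context: A lifted graph is a connected topological space $T$ with a homeomorphism $h\colon\mathbb R\to h(\mathbb R)\subset T$ and a homeomorphism $\tau\colon T\to T$ such that $\tau(h(x))=h(x+1)$, the closure of each connected component of $T\setminus h(\mathbb R)$ is a topological finite graph meeting $h(\mathbb R)$ in exactly one point, and only finitely many such components have closure meeting $h([0,1])$. Identify $h(\mathbb R)$ with $\mathbb R$, write $x+m:=\tau^m(x)$; $r_{\mathbb R}\colon T\to\mathbb R$ is the identity on $\mathbb R$ and maps a component $C$ of $T\setminus\mathbb R$ to the point $\overline C\cap\mathbb R$. $F$ has degree 1 if $F(x+1)=F(x)+1$. Let $T_{\mathbb R}:=\overline{\bigcup_{n\ge0}F^n(\mathbb R)}$, $X:=\overline{T\setminus T_{\mathbb R}}\cap r_{\mathbb R}^{-1}([0,1))$. $F$ is sun-like if $(T\setminus T_{\mathbb R})\cap r_{\mathbb R}^{-1}([0,1))$ consists of finitely many intervals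 with pairwise disjoint closures $X^i$, $i\in\Lambda$ (branches), each a compact interval meeting $T_{\mathbb R}$ in one endpoint $\min X^i$ (fixing the order of $X^i$). $X^\infty:=\{x\in X:F^n(x)\in X+\mathbb Z\ \forall n\ge0\}$. A basic partition is a finite family ${\cal P}=\{X^i_j\}$ of pairwise disjoint nonempty compact intervals $X^i_1<\dots<X^i_{N_i}$ in $X^i$, with $\ell(X^i_j)\in\Lambda$, $p(X^i_j)\in\mathbb Z$, such that $F(X^i_j)\subset(X^{\ell(X^i_j)}+p(X^i_j))\cup\mathrm{Int}(T_{\mathbb R})$, $F(\min X^i_j)=\min X^{\ell(X^i_j)}+p(X^i_j)$, and $F(X\setminus\bigcup X^i_j)\cap(X+\mathbb Z)=\emptyset$. For $x\in X^\infty$ and each $n\ge0$ there is a unique $A_n\in{\cal P}$ with $F^n(x)\in A_n+\mathbb Z$; $(A_n)_{n\ge0}$ is the itinerary of $x$. For $A_0,\dots,A_n\in{\cal P}$, $\langle A_0\dots A_n\rangle:=F^n(\{x\in T: F^i(x)\in A_i+\mathbb Z,\ 0\le i\le n\})\cap X$. $A_0\dots A_n\sim B_0\dots B_m$ iff for some $k\le\min(n,m)$, $A_{n-i}=B_{m-i}$ ($0\le i\le k$) and $\langle A_0\dots A_{n-k}\rangle=A_{n-k}=B_{m-k}=\langle B_0\dots B_{m-k}\rangle$. The covering graph ${\cal G}$: vertices are classes $A_0\dots A_n/\!\sim$ with $\langle A_0\dots A_n\rangle\ne\emptyset$; arrow $\alpha\to\beta$ iff $\alpha=A_0\dots A_n/\!\sim$,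 $\beta=A_0\dots A_nA_{n+1}/\!\sim$ for some $A_i\in{\cal P}$. An infinite path is a sequence of vertices $(\alpha_n)$ with $\alpha_n\to\alpha_{n+1}$ for all $n$. The significant part of $A_0\dots A_n$ is $A_i\dots A_n$ with $i$ largest such that $A_0\dots A_n\sim A_i\dots A_n$; the height of its class is $H:=n-i$. *)

theory Defs
  imports "HOL-Analysis.Analysis"
begin

text \<open>A topological finite graph: a compact Hausdorff space that is the union of a finite
vertex set V and finitely many edges; each edge is a continuous map from [0,1] with
endpoints in V, injective on (0,1), and the open edges are pairwise disjoint and disjoint
from V (i.e. a finite 1-dimensional CW complex).\<close>

definition finite_top_graph :: "'a topology \<Rightarrow> bool" where
  "finite_top_graph G \<longleftrightarrow> Hausdorff_space G \<and> compact_space G \<and>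
    (\<exists>(V::'a set) (E::nat set) (e::nat \<Rightarrow> real \<Rightarrow> 'a).
       finite V \<and> finite E \<and> V \<subseteq> topspace G \<and>
       (\<forall>j\<in>E. continuous_map (subtopology euclideanreal {0..1}) G (e j) \<and>
               inj_on (e j) {0<..<1} \<and> e j 0 \<in> V \<and> e j 1 \<in> V \<and>
               e j ` {0<..<1} \<inter> V = {}) \<and>
       (\<forall>j\<in>E. \<forall>j'\<in>E. j \<noteq> j' \<longrightarrow> e j ` {0<..<1} \<inter> e j' ` {0<..<1} = {}) \<and>
       topspace G = V \<union> (\<Union>j\<in>E. e j ` {0..1}))"

definition off_line_components :: "'a topology \<Rightarrow> (real \<Rightarrow> 'a) \<Rightarrow> 'a set set" where
  "off_line_components T h = connected_components_of (subtopology T (topspace T - range h))"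

definition lifted_graph :: "'a topology \<Rightarrow> (real \<Rightarrow> 'a) \<Rightarrow> ('a \<Rightarrow> 'a) \<Rightarrow> bool" where
  "lifted_graph T h \<tau> \<longleftrightarrow>
     connected_space T \<and>
     embedding_map euclideanreal T h \<and>
     homeomorphic_map T T \<tau> \<and>
     (\<forall>x. \<tau> (h x) = h (x + 1)) \<and>
     (\<forall>C\<in>off_line_components T h.
        finite_top_graph (subtopology T (T closure_of C)) \<and>
        (\<exists>!q. q \<in> (T closure_of C) \<inter> range h)) \<and>
     finite {C\<in>off_line_components T h. (T closure_of C) \<inter> h ` {0..1} \<noteq> {}}"

text \<open>Translation q + m := tau^m(q), m an integer.\<close>
definition tshift :: "'a topology \<Rightarrow> ('a \<Rightarrow> 'a) \<Rightarrow> int \<Rightarrow> 'a \<Rightarrow> 'a" where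
  "tshift T \<tau> m q = (if 0 \<le> m then (\<tau> ^^ nat m) q
                      else (inv_into (topspace T) \<tau> ^^ nat (- m)) q)"

definition shiftZ :: "'a topology \<Rightarrow> ('a \<Rightarrow> 'a) \<Rightarrow> 'a set \<Rightarrow> 'a set" where
  "shiftZ T \<tau> A = (\<Union>m::int. tshift T \<tau> m ` A)"

text \<open>The retraction r_R : T -> R (values in R, identifying h(R) with R).\<close>
definition rR :: "'a topology \<Rightarrow> (real \<Rightarrow> 'a) \<Rightarrow> 'a \<Rightarrow> real" where
  "rR T h q = (if q \<in> range h then inv h q
     else (THE x. h x \<in> T closure_of
                (connected_component_of_set (subtopology T (topspace T - range h)) q)))"

definition degree_one :: "'a topology \<Rightarrow> ('a \<Rightarrow> 'a) \<Rightarrow> ('a \<Rightarrow> 'a) \<Rightarrow> bool" where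
  "degree_one T \<tau> F \<longleftrightarrow> (\<forall>q\<in>topspace T. F (\<tau> q) = \<tau> (F q))"

definition TR :: "'a topology \<Rightarrow> (real \<Rightarrow> 'a) \<Rightarrow> ('a \<Rightarrow> 'a) \<Rightarrow> 'a set" where
  "TR T h F = T closure_of (\<Union>n. (F ^^ n) ` range h)"

definition r01 :: "'a topology \<Rightarrow> (real \<Rightarrow> 'a) \<Rightarrow> 'a set" where
  "r01 T h = {q \<in> topspace T. rR T h q \<in> {0..<1}}"

definition Xset :: "'a topology \<Rightarrow> (real \<Rightarrow> 'a) \<Rightarrow> ('a \<Rightarrow> 'a) \<Rightarrow> 'a set" where
  "Xset T h F = (T closure_of (topspace T - TR T h F)) \<inter> r01 T h"

text \<open>Sun-like: the branches X^i (i in Lambda) are given by embeddings gamma i of [0,1],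
with min X^i = gamma i 0 (this fixes the order on X^i); the set
(T - T_R) cap r^{-1}[0,1) is the union of the intervals gamma i ((0,1]), whose closures
X^i = gamma i ([0,1]) are pairwise disjoint and meet T_R exactly in min X^i.\<close>
definition sun_like ::
  "'a topology \<Rightarrow> (real \<Rightarrow> 'a) \<Rightarrow> ('a \<Rightarrow> 'a) \<Rightarrow> 'i set \<Rightarrow> ('i \<Rightarrow> real \<Rightarrow> 'a) \<Rightarrow> bool" where
  "sun_like T h F \<Lambda> \<gamma> \<longleftrightarrow>
     finite \<Lambda> \<and>
     (\<forall>i\<in>\<Lambda>. embedding_map (subtopology euclideanreal {0..1}) T (\<gamma> i)) \<and>
     (topspace T - TR T h F) \<inter> r01 T h = (\<Union>i\<in>\<Lambda>. \<gamma> i ` {0<..1}) \<and>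
     (\<forall>i\<in>\<Lambda>. T closure_of (\<gamma> i ` {0<..1}) = \<gamma> i ` {0..1}) \<and>
     (\<forall>i\<in>\<Lambda>. \<forall>j\<in>\<Lambda>. i \<noteq> j \<longrightarrow> \<gamma> i ` {0..1} \<inter> \<gamma> j ` {0..1} = {}) \<and>
     (\<forall>i\<in>\<Lambda>. \<gamma> i ` {0..1} \<inter> TR T h F = {\<gamma> i 0})"

definition Xinf :: "'a topology \<Rightarrow> (real \<Rightarrow> 'a) \<Rightarrow> ('a \<Rightarrow> 'a) \<Rightarrow> ('a \<Rightarrow> 'a) \<Rightarrow> 'a set" where
  "Xinf T h \<tau> F = {x \<in> Xset T h F. \<forall>n. (F ^^ n) x \<in> shiftZ T \<tau> (Xset T h F)}"

text \<open>Elements of the partition are the sets X^i_j themselves; each is a compact interval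
gamma i [a,b] inside the branch X^i, with minimum gamma i a.\<close>
definition basic_partition ::
  "'a topology \<Rightarrow> (real \<Rightarrow> 'a) \<Rightarrow> ('a \<Rightarrow> 'a) \<Rightarrow> ('a \<Rightarrow> 'a) \<Rightarrow> 'i set \<Rightarrow> ('i \<Rightarrow> real \<Rightarrow> 'a)
   \<Rightarrow> 'a set set \<Rightarrow> ('a set \<Rightarrow> 'i) \<Rightarrow> ('a set \<Rightarrow> int) \<Rightarrow> bool" where
  "basic_partition T h \<tau> F \<Lambda> \<gamma> P lab p \<longleftrightarrow>
     finite P \<and>
     (\<forall>A\<in>P. \<forall>B\<in>P. A \<noteq> B \<longrightarrow> A \<inter> B = {}) \<and>
     (\<forall>A\<in>P. lab A \<in> \<Lambda>) \<and>
     (\<forall>A\<in>P. \<exists>i\<in>\<Lambda>. \<exists>a b. 0 \<le> a \<and> a \<le> b \<and> b \<le> 1 \<and> A = \<gamma> i ` {a..b} \<and>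
               F (\<gamma> i a) = tshift T \<tau> (p A) (\<gamma> (lab A) 0)) \<and>
     (\<forall>A\<in>P. F ` A \<subseteq> tshift T \<tau> (p A) ` (\<gamma> (lab A) ` {0..1}) \<union> (T interior_of TR T h F)) \<and>
     F ` (Xset T h F - \<Union>P) \<inter> shiftZ T \<tau> (Xset T h F) = {}"

definition is_itinerary ::
  "'a topology \<Rightarrow> ('a \<Rightarrow> 'a) \<Rightarrow> ('a \<Rightarrow> 'a) \<Rightarrow> 'a set set \<Rightarrow> 'a \<Rightarrow> (nat \<Rightarrow> 'a set) \<Rightarrow> bool" where
  "is_itinerary T \<tau> F P x A \<longleftrightarrow> (\<forall>n. A n \<in> P \<and> (F ^^ n) x \<in> shiftZ T \<tau> (A n))"

definition words :: "'a set set \<Rightarrow> 'a set list set" where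
  "words P = {w. w \<noteq> [] \<and> set w \<subseteq> P}"

definition cyl :: "'a topology \<Rightarrow> (real \<Rightarrow> 'a) \<Rightarrow> ('a \<Rightarrow> 'a) \<Rightarrow> ('a \<Rightarrow> 'a) \<Rightarrow> 'a set list \<Rightarrow> 'a set" where
  "cyl T h \<tau> F w =
     (F ^^ (length w - 1)) ` {x \<in> topspace T. \<forall>i<length w. (F ^^ i) x \<in> shiftZ T \<tau> (w ! i)}
     \<inter> Xset T h F"

definition wsim :: "'a topology \<Rightarrow> (real \<Rightarrow> 'a) \<Rightarrow> ('a \<Rightarrow> 'a) \<Rightarrow> ('a \<Rightarrow> 'a)
                    \<Rightarrow> 'a set list \<Rightarrow> 'a set list \<Rightarrow> bool" where
  "wsim T h \<tau> F w v \<longleftrightarrow>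
     (let n = length w - 1; m = length v - 1 in
       \<exists>k \<le> min n m. (\<forall>i\<le>k. w ! (n - i) = v ! (m - i)) \<and>
          cyl T h \<tau> F (take (n - k + 1) w) = w ! (n - k) \<and>
          w ! (n - k) = v ! (m - k) \<and>
          cyl T h \<tau> F (take (m - k + 1) v) = v ! (m - k))"

definition cls :: "'a topology \<Rightarrow> (real \<Rightarrow> 'a) \<Rightarrow> ('a \<Rightarrow> 'a) \<Rightarrow> ('a \<Rightarrow> 'a) \<Rightarrow> 'a set set
                   \<Rightarrow> 'a set list \<Rightarrow> 'a set list set" where
  "cls T h \<tau> F P w = {v \<in> words P. wsim T h \<tau> F w v}"

definition cg_vertices :: "'a topology \<Rightarrow> (real \<Rightarrow> 'a) \<Rightarrow> ('a \<Rightarrow> 'a) \<Rightarrow> ('a \<Rightarrow> 'a) \<Rightarrow> 'a set set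
                   \<Rightarrow> 'a set list set set" where
  "cg_vertices T h \<tau> F P = {cls T h \<tau> F P w | w. w \<in> words P \<and> cyl T h \<tau> F w \<noteq> {}}"

definition cg_arrow :: "'a topology \<Rightarrow> (real \<Rightarrow> 'a) \<Rightarrow> ('a \<Rightarrow> 'a) \<Rightarrow> ('a \<Rightarrow> 'a) \<Rightarrow> 'a set set
                   \<Rightarrow> 'a set list set \<Rightarrow> 'a set list set \<Rightarrow> bool" where
  "cg_arrow T h \<tau> F P \<alpha> \<beta> \<longleftrightarrow>
     \<alpha> \<in> cg_vertices T h \<tau> F P \<and> \<beta> \<in> cg_vertices T h \<tau> F P \<and>
     (\<exists>w A. w \<in> words P \<and> A \<in> P \<and> \<alpha> = cls T h \<tau> F P w \<and> \<beta> = cls T h \<tau> F P (w @ [A]))"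

definition cg_infinite_path :: "'a topology \<Rightarrow> (real \<Rightarrow> 'a) \<Rightarrow> ('a \<Rightarrow> 'a) \<Rightarrow> ('a \<Rightarrow> 'a)
                   \<Rightarrow> 'a set set \<Rightarrow> (nat \<Rightarrow> 'a set list set) \<Rightarrow> bool" where
  "cg_infinite_path T h \<tau> F P \<alpha> \<longleftrightarrow> (\<forall>n. cg_arrow T h \<tau> F P (\<alpha> n) (\<alpha> (Suc n)))"

definition word_height :: "'a topology \<Rightarrow> (real \<Rightarrow> 'a) \<Rightarrow> ('a \<Rightarrow> 'a) \<Rightarrow> ('a \<Rightarrow> 'a)
                   \<Rightarrow> 'a set list \<Rightarrow> nat" where
  "word_height T h \<tau> F w =
     (length w - 1) - (GREATEST i. i < length w \<and> wsim T h \<tau> F w (drop i w))"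

definition cls_height :: "'a topology \<Rightarrow> (real \<Rightarrow> 'a) \<Rightarrow> ('a \<Rightarrow> 'a) \<Rightarrow> ('a \<Rightarrow> 'a)
                   \<Rightarrow> 'a set set \<Rightarrow> 'a set list set \<Rightarrow> nat" where
  "cls_height T h \<tau> F P \<alpha> =
     word_height T h \<tau> F (SOME w. w \<in> words P \<and> \<alpha> = cls T h \<tau> F P w)"

end

theory Submission
  imports Defs
begin

(*
  Two words are equivalent iff they have a common suffix starting at positions j, j' where
  the cylinder is renewed (<A_0 ... A_j> = A_j), and <A_0 ... A_n B> is a function of
  <A_0 ... A_n> and B.  Hence the equivalence preserves cylinders and is a congruence for
  appending a symbol.  An itinerary then gives a path, each cylinder containing a translate
  of the current orbit point.  Conversely, a path whose first vertex has height k is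
  represented by the significant part S of that vertex (k + 1 symbols) followed by the
  symbols B_0, B_1, ... read along its arrows, and all cylinders <S B_0 ... B_n> are
  nonempty.  Since F commutes with the translation, the integer translation along an orbit
  following a prescribed sequence of partition elements is forced; so the points of the first
  element following the first n symbols form nested nonempty closed subsets of a compact
  interval, and a point of their intersection has the required itinerary.
*)

lemma homeomorphic_map_funpow:
  assumes "homeomorphic_map X X f"
  shows "homeomorphic_map X X (f ^^ n)"
proof (induction n)
  case 0
  then show ?case by (metis funpow.simps(1) homeomorphic_map_id)
next
  case (Suc n)
  then show ?case using homeomorphic_map_compose[OF Suc assms] by (metis funpow.simps(2))
qed

lemma homeomorphic_map_inv_into:
  assumes "homeomorphic_map X X f"
  shows "homeomorphic_map X X (inv_into (topspace X) f)"
proof -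
  obtain g where g: "homeomorphic_maps X X f g"
    using assms homeomorphic_map_maps by blast
  have "homeomorphic_maps X X f (inv_into (topspace X) f)"
  proof (rule homeomorphic_maps_eq[OF g])
    fix y assume y: "y \<in> topspace X"
    then have "g y \<in> topspace X" "f (g y) = y"
      using g by (auto simp: homeomorphic_maps_def continuous_map_def)
    then show "g y = inv_into (topspace X) f y"
      using homeomorphic_imp_injective_map[OF assms] by (metis inv_into_f_f)
  qed simp
  then show ?thesis
    using homeomorphic_maps_map homeomorphic_maps_sym by blast
qed

section \<open>Integer translations\<close>

locale shift_action =
  fixes T :: "'a topology" and \<tau> :: "'a \<Rightarrow> 'a"
  assumes homeomorphic_tau: "homeomorphic_map T T \<tau>"
begin

lemma tau_inv_into: "q \<in> topspace T \<Longrightarrow> \<tau> (inv_into (topspace T) \<tau> q) = q"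
  using homeomorphic_imp_surjective_map[OF homeomorphic_tau] by (simp add: f_inv_into_f)

lemma homeomorphic_map_tshift: "homeomorphic_map T T (tshift T \<tau> m)"
proof -
  have "homeomorphic_map T T (\<tau> ^^ n)" "homeomorphic_map T T (inv_into (topspace T) \<tau> ^^ n)" for n
    by (simp_all add: homeomorphic_map_funpow homeomorphic_map_inv_into homeomorphic_tau)
  then show ?thesis
    by (cases "0 \<le> m") (simp_all add: tshift_def[abs_def])
qed

lemma tshift_in_topspace: "q \<in> topspace T \<Longrightarrow> tshift T \<tau> m q \<in> topspace T"
  using homeomorphic_imp_surjective_map[OF homeomorphic_map_tshift] by blast

lemma continuous_map_tshift: "continuous_map T T (tshift T \<tau> m)"
  by (rule homeomorphic_imp_continuous_map[OF homeomorphic_map_tshift])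

lemma tshift_0 [simp]: "tshift T \<tau> 0 q = q"
  by (simp add: tshift_def)

lemma tshift_succ:
  assumes q: "q \<in> topspace T"
  shows "tshift T \<tau> (m + 1) q = \<tau> (tshift T \<tau> m q)"
proof (cases "0 \<le> m")
  case True
  then have "nat (m + 1) = Suc (nat m)" by simp
  then show ?thesis using True by (simp add: tshift_def)
next
  case False
  let ?\<iota> = "inv_into (topspace T) \<tau>"
  have "(?\<iota> ^^ n) q \<in> topspace T" for n
    by (induction n) (use q homeomorphic_imp_surjective_map[OF homeomorphic_tau] in
        \<open>auto intro: inv_into_into\<close>)
  moreover have "nat (- m) = Suc (nat (- (m + 1)))" using False by simp
  ultimately show ?thesis
    using False tau_inv_into by (simp add: tshift_def)
qed

lemma tshift_add:
  assumes "q \<in> topspace T"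
  shows "tshift T \<tau> m (tshift T \<tau> n q) = tshift T \<tau> (m + n) q"
proof (induction m rule: int_induct[where k = 0])
  case (step1 i)
  have "tshift T \<tau> (i + 1) (tshift T \<tau> n q) = \<tau> (tshift T \<tau> (i + n) q)"
    using step1 assms by (simp add: tshift_succ tshift_in_topspace)
  also have "\<dots> = tshift T \<tau> (i + 1 + n) q"
    using assms tshift_succ[of q "i + n"] by (simp add: algebra_simps)
  finally show ?case .
next
  case (step2 i)
  have "\<tau> (tshift T \<tau> (i - 1) (tshift T \<tau> n q)) = tshift T \<tau> (i + n) q"
    using step2 assms tshift_succ[of _ "i - 1"] tshift_in_topspace by simp
  also have "\<dots> = \<tau> (tshift T \<tau> (i - 1 + n) q)"
    using assms tshift_succ[of q "i - 1 + n"] by simp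
  finally have "\<tau> (tshift T \<tau> (i - 1) (tshift T \<tau> n q)) = \<tau> (tshift T \<tau> (i - 1 + n) q)" .
  then show ?case
    using homeomorphic_imp_injective_map[OF homeomorphic_tau] assms tshift_in_topspace
    by (meson inj_onD)
qed simp

lemma tshift_cancel [simp]:
  assumes "q \<in> topspace T"
  shows "tshift T \<tau> (- m) (tshift T \<tau> m q) = q" and "tshift T \<tau> m (tshift T \<tau> (- m) q) = q"
  using assms by (simp_all add: tshift_add)

lemma closedin_tshift_image: "closedin T K \<Longrightarrow> closedin T (tshift T \<tau> m ` K)"
  using homeomorphic_map_closedness_eq[OF homeomorphic_map_tshift] closedin_subset by blast

lemma tshift_in_shiftZ: "a \<in> A \<Longrightarrow> tshift T \<tau> m a \<in> shiftZ T \<tau> A"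
  unfolding shiftZ_def by blast

lemma shiftZ_tshift:
  assumes "A \<subseteq> topspace T" "q \<in> shiftZ T \<tau> A"
  shows "tshift T \<tau> m q \<in> shiftZ T \<tau> A"
proof -
  obtain n a where "a \<in> A" "q = tshift T \<tau> n a"
    using assms(2) unfolding shiftZ_def by blast
  then show ?thesis
    using assms(1) by (metis subsetD tshift_add tshift_in_shiftZ)
qed

lemma shiftZ_subset_topspace: "A \<subseteq> topspace T \<Longrightarrow> shiftZ T \<tau> A \<subseteq> topspace T"
  unfolding shiftZ_def using tshift_in_topspace by blast

lemma shiftZ_mono: "A \<subseteq> B \<Longrightarrow> shiftZ T \<tau> A \<subseteq> shiftZ T \<tau> B"
  unfolding shiftZ_def by blast

lemma funpow_tshift_commute:
  assumes F_top: "\<And>q. q \<in> topspace T \<Longrightarrow> F q \<in> topspace T"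
    and F_tau: "\<And>q. q \<in> topspace T \<Longrightarrow> F (\<tau> q) = \<tau> (F q)"
    and q: "q \<in> topspace T"
  shows "(F ^^ n) (tshift T \<tau> m q) = tshift T \<tau> m ((F ^^ n) q)"
proof -
  have F_tshift: "F (tshift T \<tau> m q) = tshift T \<tau> m (F q)" if "q \<in> topspace T" for m q
  proof (induction m rule: int_induct[where k = 0])
    case (step1 i)
    then show ?case using that by (simp add: tshift_succ tshift_in_topspace F_tau F_top)
  next
    case (step2 i)
    let ?z = "tshift T \<tau> (i - 1) q"
    have "\<tau> (F ?z) = \<tau> (tshift T \<tau> (i - 1) (F q))"
      using step2 that tshift_succ[of _ "i - 1"] by (simp add: F_tau F_top tshift_in_topspace)
    then show ?case
      using homeomorphic_imp_injective_map[OF homeomorphic_tau] that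
      by (meson F_top inj_onD tshift_in_topspace)
  qed simp
  have "(F ^^ n) q \<in> topspace T" if "q \<in> topspace T" for n q
    using F_top that by (induction n) auto
  then show ?thesis
    using q by (induction n) (auto simp: F_tshift)
qed

end

section \<open>The retraction onto the line\<close>

locale lifted_graph_space =
  fixes T :: "'a topology" and h :: "real \<Rightarrow> 'a" and \<tau> :: "'a \<Rightarrow> 'a"
  assumes lifted: "lifted_graph T h \<tau>"
begin

sublocale shift_action T \<tau>
  using lifted by unfold_locales (simp add: lifted_graph_def)

abbreviation off_line :: "'a topology" where
  "off_line \<equiv> subtopology T (topspace T - range h)"

lemma tau_h: "\<tau> (h x) = h (x + 1)"
  using lifted by (simp add: lifted_graph_def)

lemma embedding_h: "embedding_map euclideanreal T h"
  using lifted by (simp add: lifted_graph_def)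

lemma h_in_topspace: "h x \<in> topspace T"
  using homeomorphic_imp_surjective_map[OF embedding_h[unfolded embedding_map_def]] by auto

lemma inj_h: "inj h"
  using homeomorphic_imp_injective_map[OF embedding_h[unfolded embedding_map_def]] by simp

lemma tshift_h: "tshift T \<tau> m (h x) = h (x + of_int m)"
proof (induction m rule: int_induct[where k = 0])
  case (step1 i)
  then show ?case by (simp add: tshift_succ h_in_topspace tau_h add.assoc)
next
  case (step2 i)
  have "\<tau> (tshift T \<tau> (i - 1) (h x)) = \<tau> (h (x + of_int (i - 1)))"
    using step2 tshift_succ[of "h x" "i - 1"] h_in_topspace tau_h[of "x + of_int (i - 1)"]
    by (simp add: algebra_simps)
  then show ?case
    using homeomorphic_imp_injective_map[OF homeomorphic_tau] h_in_topspace tshift_in_topspace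
    by (meson inj_onD)
qed simp

lemma tau_off_line:
  assumes r: "r \<in> topspace T - range h"
  shows "\<tau> r \<in> topspace T - range h"
proof -
  have "\<tau> r \<noteq> h y" for y
  proof
    assume "\<tau> r = h y"
    then have "\<tau> r = \<tau> (h (y - 1))"
      by (simp add: tau_h)
    then have "r = h (y - 1)"
      using r h_in_topspace homeomorphic_imp_injective_map[OF homeomorphic_tau]
      by (meson DiffD1 inj_onD)
    then show False
      using r by blast
  qed
  then show ?thesis
    using r tshift_in_topspace[of r 1] tshift_succ[of r 0] by auto
qed

lemma unique_anchor:
  assumes "q \<in> topspace T - range h"
  shows "\<exists>!x. h x \<in> T closure_of connected_component_of_set off_line q"
proof -
  have "connected_component_of_set off_line q \<in> off_line_components T h"
    unfolding off_line_components_def using assms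
    by (simp add: connected_component_in_connected_components_of)
  then have "\<exists>!r. r \<in> T closure_of connected_component_of_set off_line q \<inter> range h"
    using lifted by (simp add: lifted_graph_def)
  then obtain x where "h x \<in> T closure_of connected_component_of_set off_line q"
    and "\<And>y. h y \<in> T closure_of connected_component_of_set off_line q \<Longrightarrow> h y = h x"
    by blast
  then show ?thesis
    using inj_h by (metis injD)
qed

lemma rR_h [simp]: "rR T h (h x) = x"
  unfolding rR_def using inj_h by simp

lemma rR_eqI:
  assumes "q \<in> topspace T - range h" "h x \<in> T closure_of connected_component_of_set off_line q"
  shows "rR T h q = x"
  unfolding rR_def using assms unique_anchor by (auto intro: the1_equality)

lemma rR_in_closure:
  assumes "q \<in> topspace T - range h"
  shows "h (rR T h q) \<in> T closure_of connected_component_of_set off_line q"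
  using theI'[OF unique_anchor[OF assms]] assms by (simp add: rR_def)

lemma rR_closure_connected:
  assumes S: "connectedin T S" "S \<subseteq> topspace T - range h" and s: "s \<in> S"
    and q: "q \<in> T closure_of S"
  shows "rR T h q = rR T h s"
proof -
  have S_comp: "S \<subseteq> connected_component_of_set off_line s"
    using S s by (intro connected_component_of_maximal) (simp_all add: connectedin_subtopology)
  show ?thesis
  proof (cases "q \<in> range h")
    case True
    then obtain t where t: "q = h t" by blast
    have "h t \<in> T closure_of connected_component_of_set off_line s"
      using q t closure_of_mono[OF S_comp] by blast
    then have "rR T h s = t"
      using S(2) s by (intro rR_eqI) blast+
    then show ?thesis
      by (simp only: t rR_h)
  next
    case False
    have "S \<subseteq> T closure_of S"
      using S(2) by (intro closure_of_subset) blast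
    then have "connectedin T (insert q S)"
      using q by (intro connectedin_intermediate_closure_of[OF S(1)]) auto
    moreover have "q \<in> topspace T"
      using closure_of_subset_topspace q by (rule subsetD)
    then have "insert q S \<subseteq> topspace T - range h"
      using False S(2) by blast
    ultimately have "insert q S \<subseteq> connected_component_of_set off_line s"
      using s by (intro connected_component_of_maximal) (simp_all add: connectedin_subtopology)
    then have "connected_component_of off_line s q"
      by blast
    then have "connected_component_of_set off_line q = connected_component_of_set off_line s"
      by (simp add: connected_component_of_equiv)
    moreover have "s \<notin> range h"
      using S(2) s by blast
    ultimately show ?thesis
      using False unfolding rR_def by simp
  qed
qed

lemma rR_tau:
  assumes "q \<in> topspace T"
  shows "rR T h (\<tau> q) = rR T h q + 1"
proof (cases "q \<in> range h")
  case True
  then show ?thesis by (auto simp: tau_h)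
next
  case False
  let ?C = "connected_component_of_set off_line q"
  have q_off: "q \<in> topspace T - range h"
    using False assms by blast
  have tau_cont: "continuous_map T T \<tau>"
    by (rule homeomorphic_imp_continuous_map[OF homeomorphic_tau])
  have C: "connectedin T ?C" "?C \<subseteq> topspace T - range h"
    using connectedin_connected_component_of[of off_line q]
    unfolding connectedin_subtopology by blast+
  have "h (rR T h q) \<in> T closure_of ?C"
    by (rule rR_in_closure[OF q_off])
  then have "\<tau> (h (rR T h q)) \<in> T closure_of (\<tau> ` ?C)"
    using continuous_map_image_closure_subset[OF tau_cont] by blast
  then have "h (rR T h q + 1) \<in> T closure_of (\<tau> ` ?C)"
    by (simp add: tau_h)
  moreover have "connectedin T (\<tau> ` ?C)"
    by (rule connectedin_continuous_map_image[OF tau_cont C(1)])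
  moreover have "\<tau> ` ?C \<subseteq> topspace T - range h"
    using C(2) by (intro image_subsetI tau_off_line) auto
  moreover have "\<tau> q \<in> \<tau> ` ?C"
    using q_off by (simp add: connected_component_of_refl)
  ultimately have "rR T h (h (rR T h q + 1)) = rR T h (\<tau> q)"
    by (intro rR_closure_connected)
  then show ?thesis by simp
qed

lemma rR_tshift:
  assumes "q \<in> topspace T"
  shows "rR T h (tshift T \<tau> m q) = rR T h q + of_int m"
proof (induction m rule: int_induct[where k = 0])
  case (step1 i)
  then show ?case using assms by (simp add: tshift_succ rR_tau tshift_in_topspace)
next
  case (step2 i)
  then show ?case
    using assms tshift_succ[of q "i - 1"] rR_tau[of "tshift T \<tau> (i - 1) q"] tshift_in_topspace
    by simp
qed simp

end

section \<open>Branches and the basic partition\<close>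

locale sun_like_system = lifted_graph_space T h \<tau>
  for T :: "'a topology" and h :: "real \<Rightarrow> 'a" and \<tau> :: "'a \<Rightarrow> 'a" +
  fixes F :: "'a \<Rightarrow> 'a" and \<Lambda> :: "'i set" and \<gamma> :: "'i \<Rightarrow> real \<Rightarrow> 'a"
    and P :: "'a set set" and lab :: "'a set \<Rightarrow> 'i" and p :: "'a set \<Rightarrow> int"
  assumes continuous_F: "continuous_map T T F"
    and degree_one: "degree_one T \<tau> F"
    and sun_like: "sun_like T h F \<Lambda> \<gamma>"
    and partition: "basic_partition T h \<tau> F \<Lambda> \<gamma> P lab p"
begin

abbreviation X :: "'a set" where
  "X \<equiv> Xset T h F"

lemma continuous_map_funpow_F: "continuous_map T T (F ^^ n)"
proof (induction n)
  case (Suc n)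
  then show ?case
    using continuous_map_compose[OF Suc continuous_F] by (simp add: o_def)
qed simp

lemma funpow_F_in_topspace: "q \<in> topspace T \<Longrightarrow> (F ^^ n) q \<in> topspace T"
  using continuous_map_image_subset_topspace[OF continuous_map_funpow_F] by blast

lemma funpow_F_tshift: "q \<in> topspace T \<Longrightarrow> (F ^^ n) (tshift T \<tau> m q) = tshift T \<tau> m ((F ^^ n) q)"
  using funpow_tshift_commute[of F] funpow_F_in_topspace[of _ 1] degree_one
  by (simp add: degree_one_def)

lemma X_subset_topspace: "X \<subseteq> topspace T"
  unfolding Xset_def r01_def by blast

text \<open>\<open>X\<close> lies over \<open>[0, 1)\<close>, and \<open>tshift d\<close> moves the retraction by \<open>d\<close>.\<close>

lemma X_tshift_eq_0:
  assumes e: "e \<in> X" and d: "tshift T \<tau> d e \<in> X"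
  shows "d = 0"
proof -
  have "rR T h e \<in> {0..<1}" "rR T h (tshift T \<tau> d e) \<in> {0..<1}"
    using e d unfolding Xset_def r01_def by blast+
  moreover have "rR T h (tshift T \<tau> d e) = rR T h e + of_int d"
    using e X_subset_topspace by (blast intro: rR_tshift)
  ultimately have "-1 < (of_int d :: real)" "(of_int d :: real) < 1"
    by auto
  then show ?thesis by linarith
qed

lemma h_in_TR: "h x \<in> TR T h F"
proof -
  have "h x \<in> (\<Union>n. (F ^^ n) ` range h)"
    by (rule UN_I[of 0]) simp_all
  moreover have "(\<Union>n. (F ^^ n) ` range h) \<subseteq> topspace T"
    using funpow_F_in_topspace h_in_topspace by blast
  ultimately show ?thesis
    unfolding TR_def by (meson closure_of_subset subsetD)
qed

lemma continuous_map_branch: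
  assumes "i \<in> \<Lambda>"
  shows "continuous_map (subtopology euclideanreal {0..1}) T (\<gamma> i)"
  using homeomorphic_imp_continuous_map sun_like assms
  by (fastforce simp: sun_like_def embedding_map_def continuous_map_in_subtopology)

lemma branch_subset_X:
  assumes i: "i \<in> \<Lambda>"
  shows "\<gamma> i ` {0..1} \<subseteq> X"
proof -
  have open_branch: "\<gamma> i ` {0<..1} \<subseteq> (topspace T - TR T h F) \<inter> r01 T h"
    using sun_like i by (auto simp: sun_like_def)
  have closure: "T closure_of (\<gamma> i ` {0<..1}) = \<gamma> i ` {0..1}"
    using sun_like i by (simp add: sun_like_def)
  have "\<gamma> i ` {0..1} \<subseteq> T closure_of (topspace T - TR T h F)"
    using closure_of_mono[of "\<gamma> i ` {0<..1}" "topspace T - TR T h F" T] open_branch closure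
    by auto
  moreover have "\<gamma> i 0 \<in> r01 T h"
  proof -
    have "connectedin (subtopology euclideanreal {0..1}) {0<..1::real}"
      by (auto simp: connectedin_subtopology path_connected_imp_connected)
    then have "connectedin T (\<gamma> i ` {0<..1})"
      by (rule connectedin_continuous_map_image[OF continuous_map_branch[OF i]])
    moreover have "\<gamma> i ` {0<..1} \<subseteq> topspace T - range h"
      using open_branch h_in_TR by auto
    ultimately have "rR T h (\<gamma> i 0) = rR T h (\<gamma> i 1)"
      using closure by (intro rR_closure_connected) auto
    moreover have "\<gamma> i 0 \<in> topspace T"
      using closure closure_of_subset_topspace by fastforce
    moreover have "\<gamma> i 1 \<in> r01 T h"
      using open_branch by force
    ultimately show ?thesis
      by (simp add: r01_def)
  qed
  then have "\<gamma> i ` {0..1} \<subseteq> r01 T h"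
    using open_branch by (auto simp: image_subset_iff)
  ultimately show ?thesis
    unfolding Xset_def by blast
qed

lemma partition_element:
  assumes "A \<in> P"
  obtains i a b where "i \<in> \<Lambda>" "0 \<le> a" "a \<le> b" "b \<le> 1" "A = \<gamma> i ` {a..b}"
  using partition assms unfolding basic_partition_def by meson

lemma partition_subset_X: "A \<in> P \<Longrightarrow> A \<subseteq> X"
  by (elim partition_element) (use branch_subset_X in fastforce)

lemma partition_subset_topspace: "A \<in> P \<Longrightarrow> A \<subseteq> topspace T"
  using partition_subset_X X_subset_topspace by blast

lemma closedin_partition:
  assumes "A \<in> P"
  shows "closedin T A"
proof -
  obtain i a b where i: "i \<in> \<Lambda>" "0 \<le> a" "a \<le> b" "b \<le> 1" and A: "A = \<gamma> i ` {a..b}"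
    using partition_element[OF assms] .
  have "homeomorphic_map (subtopology euclideanreal {0..1}) (subtopology T (\<gamma> i ` {0..1})) (\<gamma> i)"
    using sun_like i by (simp add: sun_like_def embedding_map_def)
  moreover have "closedin (subtopology euclideanreal {0..1}) {a..b}"
    using i by (simp add: closedin_closed_subtopology)
  ultimately have "closedin (subtopology T (\<gamma> i ` {0..1})) A"
    using A i homeomorphic_map_closedness by fastforce
  moreover have "closedin T (\<gamma> i ` {0..1})"
    using sun_like i unfolding sun_like_def by (metis closedin_closure_of)
  ultimately show ?thesis
    using closedin_trans_full by blast
qed

lemma compactin_partition:
  assumes "A \<in> P"
  shows "compactin T A"
proof -
  obtain i a b where i: "i \<in> \<Lambda>" "0 \<le> a" "a \<le> b" "b \<le> 1" and A: "A = \<gamma> i ` {a..b}"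
    using partition_element[OF assms] .
  have "compactin (subtopology euclideanreal {0..1}) {a..b}"
    using i by (simp add: compactin_subtopology)
  then show ?thesis
    using image_compactin[OF _ continuous_map_branch[OF i(1)]] A by blast
qed

lemma tshift_TR: "tshift T \<tau> j ` TR T h F \<subseteq> TR T h F"
proof -
  let ?U = "\<Union>n. (F ^^ n) ` range h"
  have "tshift T \<tau> j ((F ^^ n) (h x)) = (F ^^ n) (h (x + of_int j))" for n x
    using funpow_F_tshift[OF h_in_topspace] tshift_h by simp
  then have "tshift T \<tau> j ` ?U \<subseteq> ?U"
    by blast
  then have "T closure_of (tshift T \<tau> j ` ?U) \<subseteq> T closure_of ?U"
    by (rule closure_of_mono)
  moreover have "tshift T \<tau> j ` TR T h F \<subseteq> T closure_of (tshift T \<tau> j ` ?U)"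
    unfolding TR_def by (rule continuous_map_image_closure_subset[OF continuous_map_tshift])
  ultimately show ?thesis
    unfolding TR_def by blast
qed

lemma tshift_X_notin_interior_TR:
  assumes b: "b \<in> X"
  shows "tshift T \<tau> k b \<notin> T interior_of TR T h F"
proof -
  have "tshift T \<tau> k ` (topspace T - TR T h F) \<subseteq> topspace T - TR T h F"
  proof (intro image_subsetI DiffI)
    fix r assume r: "r \<in> topspace T - TR T h F"
    then show "tshift T \<tau> k r \<in> topspace T"
      by (simp add: tshift_in_topspace)
    show "tshift T \<tau> k r \<notin> TR T h F"
    proof
      assume "tshift T \<tau> k r \<in> TR T h F"
      then have "tshift T \<tau> (- k) (tshift T \<tau> k r) \<in> TR T h F"
        using tshift_TR by blast
      then show False
        using r by simp
    qed
  qed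
  moreover have "tshift T \<tau> k b \<in> T closure_of (tshift T \<tau> k ` (topspace T - TR T h F))"
    using continuous_map_image_closure_subset[OF continuous_map_tshift] b
    by (fastforce simp: Xset_def)
  ultimately have "tshift T \<tau> k b \<in> T closure_of (topspace T - TR T h F)"
    using closure_of_mono by blast
  then show ?thesis
    by (simp add: closure_of_complement)
qed

lemma lab_in_branches: "A \<in> P \<Longrightarrow> lab A \<in> \<Lambda>"
  using partition by (simp add: basic_partition_def)

lemma F_partition_into_branch:
  assumes A: "A \<in> P" and a: "a \<in> A" and b: "b \<in> X" and Fa: "F a = tshift T \<tau> k b"
  obtains e where "e \<in> X" "F a = tshift T \<tau> (p A) e"
proof -
  have "F ` A \<subseteq> tshift T \<tau> (p A) ` (\<gamma> (lab A) ` {0..1}) \<union> T interior_of TR T h F"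
    using partition A by (simp add: basic_partition_def)
  moreover have "F a \<notin> T interior_of TR T h F"
    using Fa tshift_X_notin_interior_TR[OF b] by simp
  ultimately obtain e where "e \<in> \<gamma> (lab A) ` {0..1}" "F a = tshift T \<tau> (p A) e"
    using a by blast
  then show ?thesis
    using that branch_subset_X[OF lab_in_branches[OF A]] by blast
qed

text \<open>The translation at each step of an orbit through the partition is forced, because the
  integer translates of \<open>X\<close> are disjoint.\<close>

lemma F_in_forced_tshift:
  assumes A: "A \<in> P" and B: "B \<in> P"
    and q: "q \<in> tshift T \<tau> c ` A" and Fq: "F q \<in> shiftZ T \<tau> B"
  shows "F q \<in> tshift T \<tau> (c + p A) ` B"
proof -
  obtain a where a: "a \<in> A" "q = tshift T \<tau> c a"
    using q by blast
  have aT: "a \<in> topspace T" and FaT: "F a \<in> topspace T"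
    using a partition_subset_topspace[OF A] funpow_F_in_topspace[of a 1] by auto
  obtain m b where b: "b \<in> B" "F q = tshift T \<tau> m b"
    using Fq unfolding shiftZ_def by blast
  have bX: "b \<in> X" and bT: "b \<in> topspace T"
    using b partition_subset_X[OF B] X_subset_topspace by blast+
  have "F q = tshift T \<tau> c (F a)"
    using a funpow_F_tshift[OF aT, of 1] by simp
  then have "F a = tshift T \<tau> (- c) (F q)"
    using FaT by simp
  also have "\<dots> = tshift T \<tau> (m - c) b"
    using b(2) bT by (simp add: tshift_add)
  finally have Fa: "F a = tshift T \<tau> (m - c) b" .
  obtain e where e: "e \<in> X" "F a = tshift T \<tau> (p A) e"
    using F_partition_into_branch[OF A a(1) bX Fa] .
  have "b = tshift T \<tau> (- (m - c)) (F a)"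
    using Fa tshift_cancel(1)[OF bT, of "m - c"] by simp
  also have "\<dots> = tshift T \<tau> (p A - (m - c)) e"
    using e X_subset_topspace by (simp add: subset_iff tshift_add algebra_simps)
  finally have "p A - (m - c) = 0"
    using X_tshift_eq_0[OF e(1)] bX by metis
  then show ?thesis
    using b by (simp add: algebra_simps)
qed

section \<open>Cylinders and equivalent words\<close>

definition follow_set :: "'a set list \<Rightarrow> 'a set" where
  "follow_set w = {x \<in> topspace T. \<forall>i<length w. (F ^^ i) x \<in> shiftZ T \<tau> (w ! i)}"

lemma cyl_eq_follow_set: "cyl T h \<tau> F w = (F ^^ (length w - 1)) ` follow_set w \<inter> X"
  by (simp add: cyl_def follow_set_def)

lemma words_nth: "w \<in> words P \<Longrightarrow> i < length w \<Longrightarrow> w ! i \<in> P"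
  unfolding words_def by (simp add: subset_iff)

lemma follow_set_tshift:
  assumes w: "w \<in> words P" and x: "x \<in> follow_set w"
  shows "tshift T \<tau> m x \<in> follow_set w"
proof -
  have "(F ^^ i) (tshift T \<tau> m x) \<in> shiftZ T \<tau> (w ! i)" if i: "i < length w" for i
    using x i funpow_F_tshift shiftZ_tshift[OF partition_subset_topspace[OF words_nth[OF w i]]]
    by (simp add: follow_set_def)
  then show ?thesis
    using x tshift_in_topspace by (simp add: follow_set_def)
qed

lemma image_follow_set:
  assumes w: "w \<in> words P"
  shows "(F ^^ (length w - 1)) ` follow_set w = shiftZ T \<tau> (cyl T h \<tau> F w)"
proof (intro equalityI subsetI)
  let ?l = "length w - 1"
  have l: "?l < length w"
    using w by (simp add: words_def)
  fix y assume "y \<in> (F ^^ ?l) ` follow_set w"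
  then obtain x where x: "x \<in> follow_set w" "y = (F ^^ ?l) x"
    by blast
  then have xT: "x \<in> topspace T"
    by (simp add: follow_set_def)
  have "y \<in> shiftZ T \<tau> (w ! ?l)"
    using x l by (simp add: follow_set_def)
  then obtain m a where a: "a \<in> w ! ?l" "y = tshift T \<tau> m a"
    unfolding shiftZ_def by blast
  have aX: "a \<in> X"
    using a(1) partition_subset_X[OF words_nth[OF w l]] by blast
  have "(F ^^ ?l) (tshift T \<tau> (- m) x) = tshift T \<tau> (- m) y"
    using funpow_F_tshift[OF xT] x(2) by simp
  also have "\<dots> = a"
    using a(2) aX X_subset_topspace by auto
  finally have "(F ^^ ?l) (tshift T \<tau> (- m) x) = a" .
  then have "a \<in> cyl T h \<tau> F w"
    unfolding cyl_eq_follow_set using follow_set_tshift[OF w x(1)] aX by blast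
  then show "y \<in> shiftZ T \<tau> (cyl T h \<tau> F w)"
    using a(2) by (simp add: tshift_in_shiftZ)
next
  let ?l = "length w - 1"
  fix y assume "y \<in> shiftZ T \<tau> (cyl T h \<tau> F w)"
  then obtain m a where a: "a \<in> cyl T h \<tau> F w" "y = tshift T \<tau> m a"
    unfolding shiftZ_def by blast
  then obtain x where x: "x \<in> follow_set w" "a = (F ^^ ?l) x"
    unfolding cyl_eq_follow_set by blast
  have "y = (F ^^ ?l) (tshift T \<tau> m x)"
    using a x funpow_F_tshift by (simp add: follow_set_def)
  then show "y \<in> (F ^^ ?l) ` follow_set w"
    using follow_set_tshift[OF w x(1)] by blast
qed

lemma cyl_singleton:
  assumes A: "A \<in> P"
  shows "cyl T h \<tau> F [A] = A"
proof -
  have "cyl T h \<tau> F [A] = topspace T \<inter> shiftZ T \<tau> A \<inter> X"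
    by (auto simp: cyl_eq_follow_set follow_set_def)
  also have "\<dots> = A"
  proof
    show "A \<subseteq> topspace T \<inter> shiftZ T \<tau> A \<inter> X"
      using partition_subset_X[OF A] X_subset_topspace tshift_in_shiftZ[of _ A 0] by auto
    show "topspace T \<inter> shiftZ T \<tau> A \<inter> X \<subseteq> A"
    proof
      fix q assume q: "q \<in> topspace T \<inter> shiftZ T \<tau> A \<inter> X"
      then obtain m a where a: "a \<in> A" "q = tshift T \<tau> m a"
        unfolding shiftZ_def by blast
      then have "m = 0"
        using X_tshift_eq_0[of a m] q partition_subset_X[OF A] by blast
      then show "q \<in> A"
        using a by simp
    qed
  qed
  finally show ?thesis .
qed

lemma cyl_snoc:
  assumes w: "w \<in> words P"
  shows "cyl T h \<tau> F (w @ [B]) = F ` (shiftZ T \<tau> (cyl T h \<tau> F w) \<inter> {y. F y \<in> shiftZ T \<tau> B}) \<inter> X"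
proof -
  let ?l = "length w - 1"
  have len: "length w = Suc ?l"
    using w by (simp add: words_def)
  have iterate: "F ^^ length w = F \<circ> F ^^ ?l"
    using len by (metis funpow.simps(2))
  have follow: "follow_set (w @ [B]) = {x \<in> follow_set w. F ((F ^^ ?l) x) \<in> shiftZ T \<tau> B}"
    unfolding follow_set_def by (auto simp: nth_append less_Suc_eq iterate)
  have "(F ^^ length w) ` follow_set (w @ [B])
      = F ` (F ^^ ?l) ` {x \<in> follow_set w. F ((F ^^ ?l) x) \<in> shiftZ T \<tau> B}"
    by (simp only: follow iterate image_comp)
  also have "\<dots> = F ` ((F ^^ ?l) ` follow_set w \<inter> {y. F y \<in> shiftZ T \<tau> B})"
    by blast
  finally have "(F ^^ length w) ` follow_set (w @ [B])
      = F ` ((F ^^ ?l) ` follow_set w \<inter> {y. F y \<in> shiftZ T \<tau> B})" .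
  then show ?thesis
    unfolding cyl_eq_follow_set[of "w @ [B]"] image_follow_set[OF w, symmetric] by simp
qed

lemma cyl_append_cong:
  assumes "u \<in> words P" "v \<in> words P" "set z \<subseteq> P"
    and "cyl T h \<tau> F u = cyl T h \<tau> F v"
  shows "cyl T h \<tau> F (u @ z) = cyl T h \<tau> F (v @ z)"
  using assms(3)
proof (induction z rule: rev_induct)
  case (snoc B z)
  then have "u @ z \<in> words P" "v @ z \<in> words P"
    using assms(1,2) by (auto simp: words_def)
  then show ?case
    using snoc by (simp add: cyl_snoc flip: append_assoc)
qed (use assms(4) in simp)

lemma words_take: "w \<in> words P \<Longrightarrow> take (Suc j) w \<in> words P"
  unfolding words_def by (auto dest: in_set_takeD)

lemma words_drop: "w \<in> words P \<Longrightarrow> j < length w \<Longrightarrow> drop j w \<in> words P"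
  unfolding words_def by (auto dest: in_set_dropD)

text \<open>The positions at which the definition of \<open>wsim\<close> may cut a word: there the symbols
  before the position no longer constrain the cylinder.\<close>

definition cyl_full :: "'a set list \<Rightarrow> nat \<Rightarrow> bool" where
  "cyl_full w j \<longleftrightarrow> j < length w \<and> cyl T h \<tau> F (take (Suc j) w) = w ! j"

lemma cyl_full_0: "w \<in> words P \<Longrightarrow> cyl_full w 0"
  by (cases w) (auto simp: cyl_full_def words_def cyl_singleton)

lemma cyl_full_snoc: "cyl_full w j \<Longrightarrow> cyl_full (w @ [B]) j"
  unfolding cyl_full_def by (simp add: nth_append)

lemma cyl_eq_drop_full:
  assumes w: "w \<in> words P" and full: "cyl_full w j"
  shows "cyl T h \<tau> F w = cyl T h \<tau> F (drop j w)"
proof -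
  have j: "j < length w" and wj: "w ! j \<in> P"
    using full words_nth[OF w] by (auto simp: cyl_full_def)
  have "cyl T h \<tau> F (take (Suc j) w) = cyl T h \<tau> F [w ! j]"
    using full cyl_singleton[OF wj] by (simp add: cyl_full_def)
  moreover have "set (drop (Suc j) w) \<subseteq> P"
    using w unfolding words_def by (auto dest: in_set_dropD)
  ultimately have "cyl T h \<tau> F (take (Suc j) w @ drop (Suc j) w) = cyl T h \<tau> F ([w ! j] @ drop (Suc j) w)"
    using wj by (intro cyl_append_cong words_take[OF w]) (auto simp: words_def)
  then show ?thesis
    using Cons_nth_drop_Suc[OF j] by simp
qed

lemma cyl_full_drop_iff:
  assumes w: "w \<in> words P" and full: "cyl_full w j" and "j \<le> l"
  shows "cyl_full w l \<longleftrightarrow> cyl_full (drop j w) (l - j)"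
proof (cases "l < length w")
  case True
  let ?u = "take (Suc l) w"
  have "cyl_full ?u j"
    using full assms(3) True by (simp add: cyl_full_def min_def)
  then have "cyl T h \<tau> F ?u = cyl T h \<tau> F (drop j ?u)"
    by (rule cyl_eq_drop_full[OF words_take[OF w]])
  also have "drop j ?u = take (Suc (l - j)) (drop j w)"
    using assms(3) by (simp add: drop_take Suc_diff_le)
  finally show ?thesis
    unfolding cyl_full_def using True assms(3) by auto
qed (use assms(3) in \<open>auto simp: cyl_full_def\<close>)

lemma wsim_iff_common_suffix:
  assumes w: "w \<in> words P" and v: "v \<in> words P"
  shows "wsim T h \<tau> F w v \<longleftrightarrow> (\<exists>j j'. cyl_full w j \<and> cyl_full v j' \<and> drop j w = drop j' v)"
proof -
  define n m where "n = length w - 1" and "m = length v - 1"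
  have ln: "length w = Suc n" and lm: "length v = Suc m"
    using w v by (auto simp: words_def n_def m_def)
  show ?thesis
  proof
    assume "wsim T h \<tau> F w v"
    then obtain k where k: "k \<le> min n m" "\<forall>i\<le>k. w ! (n - i) = v ! (m - i)"
      "cyl T h \<tau> F (take (n - k + 1) w) = w ! (n - k)"
      "cyl T h \<tau> F (take (m - k + 1) v) = v ! (m - k)"
      unfolding wsim_def Let_def n_def m_def by blast
    have "cyl_full w (n - k)" "cyl_full v (m - k)"
      using k ln lm unfolding cyl_full_def by simp_all
    moreover have "drop (n - k) w = drop (m - k) v"
    proof (rule nth_equalityI)
      fix i assume "i < length (drop (n - k) w)"
      then have i: "i \<le> k"
        using k ln by simp
      have "drop (n - k) w ! i = w ! (n - (k - i))"
        using i k ln by (simp add: algebra_simps)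
      also have "\<dots> = v ! (m - (k - i))"
        using k(2) by simp
      also have "\<dots> = drop (m - k) v ! i"
        using i k lm by (simp add: algebra_simps)
      finally show "drop (n - k) w ! i = drop (m - k) v ! i" .
    qed (use k ln lm in simp)
    ultimately show "\<exists>j j'. cyl_full w j \<and> cyl_full v j' \<and> drop j w = drop j' v"
      by blast
  next
    assume "\<exists>j j'. cyl_full w j \<and> cyl_full v j' \<and> drop j w = drop j' v"
    then obtain j j' where full: "cyl_full w j" "cyl_full v j'" and suffix: "drop j w = drop j' v"
      by blast
    have j: "j \<le> n" "j' \<le> m"
      using full ln lm by (auto simp: cyl_full_def)
    have len: "n - j = m - j'"
      using arg_cong[OF suffix, of length] ln lm by simp
    have agree: "w ! (n - i) = v ! (m - i)" if "i \<le> n - j" for i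
    proof -
      have "w ! (n - i) = drop j w ! (n - j - i)"
        using that j ln by (simp add: algebra_simps)
      also have "\<dots> = v ! (m - i)"
        using that j lm len by (simp add: suffix algebra_simps)
      finally show ?thesis .
    qed
    have nj: "n - (n - j) = j" "m - (n - j) = j'"
      using j len by auto
    have "cyl T h \<tau> F (take (n - (n - j) + 1) w) = w ! (n - (n - j))"
      "cyl T h \<tau> F (take (m - (n - j) + 1) v) = v ! (m - (n - j))"
      unfolding nj using full by (simp_all add: cyl_full_def)
    moreover have "n - j \<le> min n m"
      using j len by simp
    ultimately show "wsim T h \<tau> F w v"
      unfolding wsim_def Let_def n_def[symmetric] m_def[symmetric] using agree by blast
  qed
qed

lemma wsim_refl: "w \<in> words P \<Longrightarrow> wsim T h \<tau> F w w"
  using wsim_iff_common_suffix cyl_full_0 by blast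

lemma wsim_sym: "w \<in> words P \<Longrightarrow> v \<in> words P \<Longrightarrow> wsim T h \<tau> F w v \<Longrightarrow> wsim T h \<tau> F v w"
  using wsim_iff_common_suffix by metis

lemma wsim_trans:
  assumes w: "w \<in> words P" and v: "v \<in> words P" and u: "u \<in> words P"
    and "wsim T h \<tau> F w v" "wsim T h \<tau> F v u"
  shows "wsim T h \<tau> F w u"
proof -
  obtain j1 j2 where a: "cyl_full w j1" "cyl_full v j2" "drop j1 w = drop j2 v"
    using assms(4) wsim_iff_common_suffix[OF w v] by blast
  obtain j2' j3 where b: "cyl_full v j2'" "cyl_full u j3" "drop j2' v = drop j3 u"
    using assms(5) wsim_iff_common_suffix[OF v u] by blast
  show ?thesis
  proof (cases "j2 \<le> j2'")
    case True
    define d where "d = j2' - j2"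
    have "cyl_full (drop j1 w) d"
      using cyl_full_drop_iff[OF v a(2) True] b(1) a(3) by (simp add: d_def)
    then have "cyl_full w (j1 + d)"
      using cyl_full_drop_iff[OF w a(1), of "j1 + d"] by simp
    moreover have "drop (j1 + d) w = drop j3 u"
    proof -
      have "drop (j1 + d) w = drop d (drop j1 w)"
        by (simp add: add.commute)
      also have "\<dots> = drop d (drop j2 v)"
        using a(3) by simp
      also have "\<dots> = drop j2' v"
        using True by (simp add: d_def)
      finally show ?thesis
        using b(3) by simp
    qed
    ultimately show ?thesis
      using wsim_iff_common_suffix[OF w u] b(2) by blast
  next
    case False
    define d where "d = j2 - j2'"
    have "cyl_full (drop j3 u) d"
      using cyl_full_drop_iff[OF v b(1), of j2] False a(2) b(3) by (simp add: d_def)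
    then have "cyl_full u (j3 + d)"
      using cyl_full_drop_iff[OF u b(2), of "j3 + d"] by simp
    moreover have "drop (j3 + d) u = drop j1 w"
    proof -
      have "drop (j3 + d) u = drop d (drop j3 u)"
        by (simp add: add.commute)
      also have "\<dots> = drop d (drop j2' v)"
        using b(3) by simp
      also have "\<dots> = drop j2 v"
        using False by (simp add: d_def)
      finally show ?thesis
        using a(3) by simp
    qed
    ultimately show ?thesis
      using wsim_iff_common_suffix[OF w u] a(1) by metis
  qed
qed

lemma cyl_eq_if_wsim:
  "w \<in> words P \<Longrightarrow> v \<in> words P \<Longrightarrow> wsim T h \<tau> F w v \<Longrightarrow> cyl T h \<tau> F w = cyl T h \<tau> F v"
  using wsim_iff_common_suffix cyl_eq_drop_full by metis

lemma wsim_snoc: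
  assumes w: "w \<in> words P" and v: "v \<in> words P" and B: "B \<in> P"
    and "wsim T h \<tau> F w v"
  shows "wsim T h \<tau> F (w @ [B]) (v @ [B])"
proof -
  obtain j j' where a: "cyl_full w j" "cyl_full v j'" "drop j w = drop j' v"
    using assms(4) wsim_iff_common_suffix[OF w v] by blast
  then have "drop j (w @ [B]) = drop j' (v @ [B])"
    by (auto simp: cyl_full_def)
  moreover have "w @ [B] \<in> words P" "v @ [B] \<in> words P"
    using w v B by (auto simp: words_def)
  ultimately show ?thesis
    using wsim_iff_common_suffix cyl_full_snoc a by metis
qed

lemma cls_eq_iff:
  assumes "w \<in> words P" "v \<in> words P"
  shows "cls T h \<tau> F P w = cls T h \<tau> F P v \<longleftrightarrow> wsim T h \<tau> F w v"
proof
  assume "cls T h \<tau> F P w = cls T h \<tau> F P v"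
  then show "wsim T h \<tau> F w v"
    using assms wsim_refl by (auto simp: cls_def)
next
  assume "wsim T h \<tau> F w v"
  then show "cls T h \<tau> F P w = cls T h \<tau> F P v"
    unfolding cls_def using assms wsim_trans wsim_sym by blast
qed

section \<open>Itineraries and infinite paths\<close>

lemma cyl_nonempty_iff:
  assumes w: "w \<in> words P"
  shows "cyl T h \<tau> F w \<noteq> {} \<longleftrightarrow> follow_set w \<noteq> {}"
proof
  assume "follow_set w \<noteq> {}"
  then have "shiftZ T \<tau> (cyl T h \<tau> F w) \<noteq> {}"
    using image_follow_set[OF w] by auto
  then show "cyl T h \<tau> F w \<noteq> {}"
    unfolding shiftZ_def by blast
qed (auto simp: cyl_eq_follow_set)

lemma follow_set_map: "x \<in> topspace T \<Longrightarrow> (\<forall>i<n. (F ^^ i) x \<in> shiftZ T \<tau> (A i)) \<longleftrightarrow> x \<in> follow_set (map A [0..<n])"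
  by (simp add: follow_set_def)

lemma significant_part:
  assumes w: "w \<in> words P"
  obtains S where "S \<in> words P" "length S = Suc (word_height T h \<tau> F w)" "wsim T h \<tau> F w S"
proof -
  define Q where "Q i \<longleftrightarrow> i < length w \<and> wsim T h \<tau> F w (drop i w)" for i
  define i where "i = (GREATEST i. Q i)"
  have "Q 0"
    using wsim_refl[OF w] w by (simp add: Q_def words_def)
  then have Qi: "Q i"
    unfolding i_def by (rule GreatestI_nat[of Q _ "length w"]) (simp add: Q_def)
  have "word_height T h \<tau> F w = length w - 1 - i"
    by (simp add: word_height_def i_def Q_def)
  then show ?thesis
    using Qi words_drop[OF w] by (intro that[of "drop i w"]) (auto simp: Q_def)
qed

lemma nonempty_cyl_if_vertex:
  assumes w: "w \<in> words P" and "cls T h \<tau> F P w \<in> cg_vertices T h \<tau> F P"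
  shows "cyl T h \<tau> F w \<noteq> {}"
proof -
  obtain u where u: "u \<in> words P" "cyl T h \<tau> F u \<noteq> {}" "cls T h \<tau> F P w = cls T h \<tau> F P u"
    using assms(2) by (auto simp: cg_vertices_def)
  then show ?thesis
    using cls_eq_iff[OF w u(1)] cyl_eq_if_wsim[OF w u(1)] by simp
qed

lemma funpow_in_forced_tshift:
  assumes AP: "\<And>n. A n \<in> P" and x: "x \<in> A 0"
    and follows: "\<And>i. i < N \<Longrightarrow> (F ^^ i) x \<in> shiftZ T \<tau> (A i)"
  shows "i < N \<Longrightarrow> (F ^^ i) x \<in> tshift T \<tau> (\<Sum>l<i. p (A l)) ` A i"
proof (induction i)
  case (Suc i)
  then have "F ((F ^^ i) x) \<in> tshift T \<tau> ((\<Sum>l<i. p (A l)) + p (A i)) ` A (Suc i)"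
    using F_in_forced_tshift[OF AP AP] follows[OF Suc.prems] by simp
  then show ?case by simp
qed (use x in simp)

lemma closedin_forced_orbits:
  assumes AP: "\<And>n. A n \<in> P"
  shows "closedin T {x \<in> topspace T. \<forall>i<n. (F ^^ i) x \<in> tshift T \<tau> (c i) ` A i}"
proof (induction n)
  case (Suc n)
  have "closedin T {x \<in> topspace T. (F ^^ n) x \<in> tshift T \<tau> (c n) ` A n}"
    using closedin_continuous_map_preimage[OF continuous_map_funpow_F
        closedin_tshift_image[OF closedin_partition[OF AP]]] .
  then have "closedin T ({x \<in> topspace T. \<forall>i<n. (F ^^ i) x \<in> tshift T \<tau> (c i) ` A i}
      \<inter> {x \<in> topspace T. (F ^^ n) x \<in> tshift T \<tau> (c n) ` A n})"
    using Suc by (rule closedin_Int[rotated])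
  moreover have "{x \<in> topspace T. \<forall>i<Suc n. (F ^^ i) x \<in> tshift T \<tau> (c i) ` A i}
      = {x \<in> topspace T. \<forall>i<n. (F ^^ i) x \<in> tshift T \<tau> (c i) ` A i}
        \<inter> {x \<in> topspace T. (F ^^ n) x \<in> tshift T \<tau> (c n) ` A n}"
    by (auto simp: less_Suc_eq)
  ultimately show ?case by simp
qed simp

lemma follow_from_first_element:
  assumes AP: "\<And>n. A n \<in> P" and y: "y \<in> topspace T"
    and follows: "\<And>i. i < Suc N \<Longrightarrow> (F ^^ i) y \<in> shiftZ T \<tau> (A i)"
  obtains a where "a \<in> A 0" "\<And>i. i < Suc N \<Longrightarrow> (F ^^ i) a \<in> shiftZ T \<tau> (A i)"
proof -
  obtain m a where a: "a \<in> A 0" "y = tshift T \<tau> m a"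
    using follows[of 0] unfolding shiftZ_def by auto
  have "a \<in> topspace T"
    using a(1) partition_subset_topspace[OF AP] by blast
  then have ya: "tshift T \<tau> (- m) y = a"
    using a(2) by simp
  have "(F ^^ i) a \<in> shiftZ T \<tau> (A i)" if "i < Suc N" for i
    using funpow_F_tshift[OF y, of i "- m"] ya
      shiftZ_tshift[OF partition_subset_topspace[OF AP] follows[OF that], of "- m"]
    by simp
  then show ?thesis
    using that a(1) by blast
qed

lemma exists_point_with_itinerary:
  assumes AP: "\<And>n. A n \<in> P"
    and prefixes: "\<And>N. \<exists>y\<in>topspace T. \<forall>i<N. (F ^^ i) y \<in> shiftZ T \<tau> (A i)"
  shows "\<exists>x. x \<in> Xinf T h \<tau> F \<and> is_itinerary T \<tau> F P x A"
proof -
  define c where "c i = (\<Sum>l<i. p (A l))" for i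
  define K where "K n = {x \<in> A 0. \<forall>i<n. (F ^^ i) x \<in> tshift T \<tau> (c i) ` A i}" for n
  have K_closed: "closedin (subtopology T (A 0)) (K n)" for n
    unfolding closedin_subtopology K_def
    using closedin_forced_orbits[where A = A and c = c and n = n, OF AP]
      partition_subset_topspace[OF AP] by blast
  have K_nonempty: "K n \<noteq> {}" for n
  proof -
    obtain y where "y \<in> topspace T" "\<And>i. i < Suc n \<Longrightarrow> (F ^^ i) y \<in> shiftZ T \<tau> (A i)"
      using prefixes[of "Suc n"] by blast
    then obtain a where a: "a \<in> A 0" and orbit: "\<And>i. i < Suc n \<Longrightarrow> (F ^^ i) a \<in> shiftZ T \<tau> (A i)"
      using follow_from_first_element[where A = A, OF AP] by blast
    have "(F ^^ i) a \<in> tshift T \<tau> (c i) ` A i" if "i < n" for i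
      unfolding c_def using funpow_in_forced_tshift[where A = A and N = "Suc n", OF AP a orbit] that
      by simp
    then show ?thesis
      unfolding K_def using a by blast
  qed
  have K_decreasing: "decseq K"
    unfolding decseq_def K_def by auto
  have "(\<Inter>n. K n) \<noteq> {}"
    by (rule compact_space_imp_nest[OF compact_space_subtopology[OF compactin_partition[OF AP]]
          K_closed K_nonempty K_decreasing])
  then obtain x where x: "\<And>n. x \<in> K n"
    by blast
  have orbit: "(F ^^ i) x \<in> shiftZ T \<tau> (A i)" for i
    using x[of "Suc i"] unfolding K_def shiftZ_def by blast
  have "x \<in> X"
    using x[of 0] partition_subset_X[OF AP] by (auto simp: K_def)
  moreover have "(F ^^ n) x \<in> shiftZ T \<tau> X" for n
    using orbit shiftZ_mono[OF partition_subset_X[OF AP]] by blast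
  ultimately show ?thesis
    using AP orbit by (auto simp: Xinf_def is_itinerary_def)
qed

lemma itinerary_path:
  assumes "is_itinerary T \<tau> F P x A"
  shows "cg_infinite_path T h \<tau> F P (\<lambda>n. cls T h \<tau> F P (map A [0..<Suc n]))"
proof -
  have AP: "A n \<in> P" and orbit: "(F ^^ n) x \<in> shiftZ T \<tau> (A n)" for n
    using assms by (auto simp: is_itinerary_def)
  have x: "x \<in> topspace T"
    using orbit[of 0] shiftZ_subset_topspace[OF partition_subset_topspace[OF AP]] by auto
  have words: "map A [0..<Suc n] \<in> words P" for n
    using AP by (auto simp: words_def)
  moreover have "cyl T h \<tau> F (map A [0..<Suc n]) \<noteq> {}" for n
    using cyl_nonempty_iff[OF words] follow_set_map[OF x] orbit by blast
  ultimately have "cls T h \<tau> F P (map A [0..<Suc n]) \<in> cg_vertices T h \<tau> F P" for n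
    unfolding cg_vertices_def by blast
  moreover have "map A [0..<Suc (Suc n)] = map A [0..<Suc n] @ [A (Suc n)]" for n
    by simp
  ultimately show ?thesis
    unfolding cg_infinite_path_def cg_arrow_def using words AP by metis
qed

lemma infinite_path_words:
  assumes path: "cg_infinite_path T h \<tau> F P \<alpha>"
  obtains S B where "S \<in> words P" "length S = Suc (cls_height T h \<tau> F P (\<alpha> 0))"
    "\<And>n. B n \<in> P" "\<And>n. \<alpha> n = cls T h \<tau> F P (S @ map B [0..<n])"
proof -
  have "\<forall>n. \<exists>w B. w \<in> words P \<and> B \<in> P \<and> \<alpha> n = cls T h \<tau> F P w \<and> \<alpha> (Suc n) = cls T h \<tau> F P (w @ [B])"
    using path by (simp add: cg_infinite_path_def cg_arrow_def)
  then obtain w B where arrow: "\<And>n. w n \<in> words P" "\<And>n. B n \<in> P"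
      "\<And>n. \<alpha> n = cls T h \<tau> F P (w n)" "\<And>n. \<alpha> (Suc n) = cls T h \<tau> F P (w n @ [B n])"
    by metis
  \<comment> \<open>the representative through which \<open>cls_height\<close> is defined\<close>
  define w0 where "w0 = (SOME w. w \<in> words P \<and> \<alpha> 0 = cls T h \<tau> F P w)"
  have w0: "w0 \<in> words P" "\<alpha> 0 = cls T h \<tau> F P w0"
    unfolding w0_def using someI[of "\<lambda>v. v \<in> words P \<and> \<alpha> 0 = cls T h \<tau> F P v"] arrow by blast+
  obtain S where S: "S \<in> words P" "length S = Suc (word_height T h \<tau> F w0)" "wsim T h \<tau> F w0 S"
    using significant_part[OF w0(1)] .
  have "\<alpha> n = cls T h \<tau> F P (S @ map B [0..<n])" for n
  proof (induction n)
    case 0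
    then show ?case
      using w0 S cls_eq_iff by simp
  next
    case (Suc n)
    have words: "S @ map B [0..<n] \<in> words P"
      using S(1) arrow(2) by (auto simp: words_def)
    then have "wsim T h \<tau> F (w n) (S @ map B [0..<n])"
      using Suc arrow(1,3) cls_eq_iff by metis
    then have "wsim T h \<tau> F (w n @ [B n]) (S @ map B [0..<Suc n])"
      using wsim_snoc[OF arrow(1) words arrow(2)] by simp
    moreover have "S @ map B [0..<Suc n] \<in> words P" "w n @ [B n] \<in> words P"
      using words arrow(1,2) by (auto simp: words_def)
    ultimately show ?case
      using arrow(4) cls_eq_iff by metis
  qed
  moreover have "cls_height T h \<tau> F P (\<alpha> 0) = word_height T h \<tau> F w0"
    by (simp add: cls_height_def w0_def)
  ultimately show ?thesis
    using that S arrow(2) by metis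
qed

lemma path_realization:
  assumes path: "cg_infinite_path T h \<tau> F P \<alpha>" and k: "cls_height T h \<tau> F P (\<alpha> 0) = k"
  shows "\<exists>x A. x \<in> Xinf T h \<tau> F \<and> is_itinerary T \<tau> F P x A \<and>
      (\<forall>n. \<alpha> n = cls T h \<tau> F P (map A [0..<n + k + 1]))"
proof -
  obtain S B where S: "S \<in> words P" "length S = Suc k"
    and B: "\<And>n. B n \<in> P" and \<alpha>: "\<And>n. \<alpha> n = cls T h \<tau> F P (S @ map B [0..<n])"
    using infinite_path_words[OF path] k by metis
  define A where "A i = (if i < Suc k then S ! i else B (i - Suc k))" for i
  have AP: "A i \<in> P" for i
    using words_nth[OF S(1)] B S(2) by (simp add: A_def)
  have prefix: "map A [0..<n + k + 1] = S @ map B [0..<n]" for n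
    by (rule nth_equalityI) (auto simp: A_def S(2) nth_append simp del: upt_Suc)
  have words: "map A [0..<n + k + 1] \<in> words P" for n
    using AP by (auto simp: words_def)
  have "\<alpha> n \<in> cg_vertices T h \<tau> F P" for n
    using path by (simp add: cg_infinite_path_def cg_arrow_def)
  then have "cyl T h \<tau> F (map A [0..<n + k + 1]) \<noteq> {}" for n
    using nonempty_cyl_if_vertex[OF words] \<alpha> prefix by simp
  then have follow: "follow_set (map A [0..<N + k + 1]) \<noteq> {}" for N
    using cyl_nonempty_iff[OF words] by blast
  have "\<exists>y\<in>topspace T. \<forall>i<N. (F ^^ i) y \<in> shiftZ T \<tau> (A i)" for N
  proof -
    obtain y where "y \<in> follow_set (map A [0..<N + k + 1])"
      using follow by blast
    then show ?thesis
      unfolding follow_set_def by (auto simp del: upt_Suc intro!: bexI[of _ y])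
  qed
  then obtain x where "x \<in> Xinf T h \<tau> F" "is_itinerary T \<tau> F P x A"
    using exists_point_with_itinerary[where A = A, OF AP] by blast
  then show ?thesis
    using \<alpha> prefix by metis
qed

end

theorem mainTheorem8:
  fixes T :: "'a topology" and h :: "real \<Rightarrow> 'a" and \<tau> F :: "'a \<Rightarrow> 'a"
    and \<Lambda> :: "'i set" and \<gamma> :: "'i \<Rightarrow> real \<Rightarrow> 'a"
    and P :: "'a set set" and lab :: "'a set \<Rightarrow> 'i" and p :: "'a set \<Rightarrow> int"
  assumes "lifted_graph T h \<tau>"
    and "continuous_map T T F"
    and "degree_one T \<tau> F"
    and "sun_like T h F \<Lambda> \<gamma>"
    and "basic_partition T h \<tau> F \<Lambda> \<gamma> P lab p"
  shows "(\<forall>x A. x \<in> Xinf T h \<tau> F \<and> is_itinerary T \<tau> F P x A \<longrightarrow>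
            cg_infinite_path T h \<tau> F P (\<lambda>n. cls T h \<tau> F P (map A [0..<Suc n])))
     \<and> (\<forall>\<alpha> k. cg_infinite_path T h \<tau> F P \<alpha> \<and> cls_height T h \<tau> F P (\<alpha> 0) = k \<longrightarrow>
            (\<exists>x A. x \<in> Xinf T h \<tau> F \<and> is_itinerary T \<tau> F P x A \<and>
                   (\<forall>n. \<alpha> n = cls T h \<tau> F P (map A [0..<n + k + 1]))))"
proof -
  interpret sun_like_system T h \<tau> F \<Lambda> \<gamma> P lab p
    using assms by unfold_locales
  show ?thesis
    using itinerary_path path_realization by blast
qed

end
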